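(* Consider the differential-algebraic system with input $u\in\mathbb R^{n_g+1}$, state $(\varphi,\omega_g)$ (where $\varphi=\varphi_g+\varphi_\ell$) and output $y$: \[ \dot\varphi_g=E_g^{\top}\omega_g,\qquad M\dot\omega_g=-D\omega_g-E_g\nabla U(\varphi)+p_g^*+u,\qquad 0=-E_\ell\nabla U(\varphi)+p_\ell^*,\qquad y=\omega_g . \] Let $(\overline\varphi,\overline\omega_g)$, with $R_\varphi^{\top}\overline\varphi\in(-\tfrac{\pi}{2},\tfrac{\pi}{2})^m$, be an equilibrium of this system for some constant input $u=\overline u$, and let $\overline y=\overline\omega_g$. Then this system is output strictly incrementally passive with respect to $(\overline u,(\overline\varphi,\overline\omega_g),\overline y)$. In particular, the storage function \[ S(\varphi,\omega_g)=\tfrac12(\omega_g-\overline\omega_g)^{\top}M(\omega_g-\overline\omega_g)+U(\varphi)-U(\overline\varphi)-(\varphi-\overline\varphi)^{\top}\nabla U(\overline\varphi) \] satisfies, along solutions, \[ \dot S=-(\omega_g-\overline\omega_g)^{\top}D(\omega_g-\overline\omega_g)+(\omega_g-\overline\omega_g)^{\top}(u-\overline u). \] Moreover, $S$ has a local strict minimum at $(\overline\varphi,\overline\omega_g)$.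
   Context: Power network: $\mathcal G=(\mathcal V,\mathcal E)$ is a connected undirected graph with buses $\mathcal V=\{0,1,\dots,n\}$ and $m$ edges; each edge $\{i,j\}$ has a susceptance $\beta_{ij}<0$, and $V_i>0$ are constant voltage magnitudes. Generator buses are $\mathcal V_g=\{0,1,\dots,n_g\}$ and load buses $\mathcal V_\ell=\mathcal V\setminus\mathcal V_g$. With an arbitrary orientation of edges, $R\in\mathbb R^{(n+1)\times m}$ is the incidence matrix ($R_{ik}=1$ if $i$ is the sink of edge $k$, $-1$ if it is the source, $0$ otherwise); $\Gamma=\mathrm{diag}(\gamma_k)$ with $\gamma_k=|\beta_{ij}|V_iV_j$ for edge $k\sim\{i,j\}$. $R_\varphi\in\mathbb R^{n\times m}$ is $R$ with its first row (bus $0$) removed. $E\in\mathbb R^{(n+1)\times n}$ is defined by $E^{\top}=[-\mathbb 1_n\ \ I_n]$ and partitioned as $E^{\top}=[E_g^{\top}\ E_\ell^{\top}]$, where $E_g$ ($E_\ell$) collects the rows of $E$ indexed by $\mathcal V_g$ ($\mathcal V_\ell$). $U(\varphi)=-\mathbb 1_m^{\top}\Gamma\,\mathbf{cos}(R_\varphi^{\top}\varphi)$ (cosine elementwise), so $\nabla U(\varphi)=R_\varphi\Gamma\,\mathbf{sin}(R_\varphi^{\top}\varphi)$. $M=\mathrm{diag}(M_i)$, $D=\mathrm{diag}(D_i)$ with $M_i,D_i>0$ for $i\in\mathcal V_g$; $p_g^*\in\mathbb R^{n_g+1}$ and $p_\ell^*\in\mathbb R^{n-n_g}$ are constant vectors;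 $\varphi_g,\varphi_\ell\in\mathbb R^n$, $\varphi=\varphi_g+\varphi_\ell$, and $\varphi_\ell$ plays the role of the algebraic variable. An equilibrium for the constant input $\overline u$ is a point $(\overline\varphi,\overline\omega_g)$ with $\overline\varphi\in\mathbb R^n$ and $\overline\omega_g=\mathbb 1\omega^*$ for some $\omega^*\in\mathbb R$, satisfying $0=-D\overline\omega_g-E_g\nabla U(\overline\varphi)+p_g^*+\overline u$ and $0=-E_\ell\nabla U(\overline\varphi)+p_\ell^*$. Incremental passivity: a DAE $\dot x_o=f(x_o,x_a,u)$, $0=g(x_o,x_a)$, $y=h(x_o,u)$ with state $x=(x_o,x_a)$ is incrementally passive with respect to $(\overline u,\overline x,\overline y)$, $\overline y=h(\overline x_o,\overline u)$, if there are a continuously differentiable function $S(x)$, nonnegative on a (possibly small) state set $\mathcal X$, and a positive semidefinite matrix $Q$ such that $\dot S\le-(y-\overline y)^{\top}Q(y-\overline y)+(y-\overline y)^{\top}(u-\overline u)$ for all $x\in\mathcal X$ and all inputs $u$; it is output strictly incrementally passive if moreover $Q$ is positive definite. *)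

theory Defs
  imports "HOL-Analysis.Analysis"
begin

text \<open>Buses are 0..n, edges are 0..m-1, generator buses are 0..ng,
load buses are ng+1..n. Edge k is oriented from bus src k to bus snk k.
Vectors in R^n (angles phi) are functions nat => real, only indices < n matter;
index i of phi corresponds to bus i+1 (row i+1 of R, i.e. R with row 0 removed).
Generator vectors (omega_g, u, p_g, M, D) are indexed by buses j <= ng.
Bus-indexed vectors (p, V) use indices <= n; p restricted to generators is p_g*,
restricted to loads is p_l*.\<close>

definition incid :: "(nat \<Rightarrow> nat) \<Rightarrow> (nat \<Rightarrow> nat) \<Rightarrow> nat \<Rightarrow> nat \<Rightarrow> real" where
  "incid src snk i k = (if i = snk k then 1 else if i = src k then -1 else 0)"

definition Rphi :: "(nat \<Rightarrow> nat) \<Rightarrow> (nat \<Rightarrow> nat) \<Rightarrow> nat \<Rightarrow> nat \<Rightarrow> real" where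
  "Rphi src snk i k = incid src snk (i + 1) k"

definition RphiT :: "nat \<Rightarrow> (nat \<Rightarrow> nat) \<Rightarrow> (nat \<Rightarrow> nat) \<Rightarrow> (nat \<Rightarrow> real) \<Rightarrow> nat \<Rightarrow> real" where
  "RphiT n src snk phi k = (\<Sum>i<n. Rphi src snk i k * phi i)"

definition gam :: "(nat \<Rightarrow> nat) \<Rightarrow> (nat \<Rightarrow> nat) \<Rightarrow> (nat \<Rightarrow> real) \<Rightarrow> (nat \<Rightarrow> real) \<Rightarrow> nat \<Rightarrow> real" where
  "gam src snk beta V k = \<bar>beta k\<bar> * V (src k) * V (snk k)"

definition Upot :: "nat \<Rightarrow> nat \<Rightarrow> (nat \<Rightarrow> nat) \<Rightarrow> (nat \<Rightarrow> nat) \<Rightarrow> (nat \<Rightarrow> real) \<Rightarrow> (nat \<Rightarrow> real) \<Rightarrow> real" where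
  "Upot n m src snk g phi = - (\<Sum>k<m. g k * cos (RphiT n src snk phi k))"

definition gradU :: "nat \<Rightarrow> nat \<Rightarrow> (nat \<Rightarrow> nat) \<Rightarrow> (nat \<Rightarrow> nat) \<Rightarrow> (nat \<Rightarrow> real) \<Rightarrow> (nat \<Rightarrow> real) \<Rightarrow> nat \<Rightarrow> real" where
  "gradU n m src snk g phi i = (\<Sum>k<m. Rphi src snk i k * g k * sin (RphiT n src snk phi k))"

definition Emat :: "nat \<Rightarrow> nat \<Rightarrow> real" where
  "Emat i j = (if i = 0 then -1 else if i = j + 1 then 1 else 0)"

text \<open>(E x)_i for a bus i <= n; E_g x / E_l x are the rows i <= ng / ng < i <= n.\<close>
definition Emul :: "nat \<Rightarrow> (nat \<Rightarrow> real) \<Rightarrow> nat \<Rightarrow> real" where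
  "Emul n x i = (\<Sum>j<n. Emat i j * x j)"

definition EgT :: "nat \<Rightarrow> (nat \<Rightarrow> real) \<Rightarrow> nat \<Rightarrow> real" where
  "EgT ng w i = (\<Sum>j\<le>ng. Emat j i * w j)"

definition ElT :: "nat \<Rightarrow> nat \<Rightarrow> (nat \<Rightarrow> real) \<Rightarrow> nat \<Rightarrow> real" where
  "ElT n ng v i = (\<Sum>j\<in>{ng<..n}. Emat j i * v j)"

definition adj :: "nat \<Rightarrow> (nat \<Rightarrow> nat) \<Rightarrow> (nat \<Rightarrow> nat) \<Rightarrow> nat \<Rightarrow> nat \<Rightarrow> bool" where
  "adj m src snk a b \<longleftrightarrow> (\<exists>k<m. (src k = a \<and> snk k = b) \<or> (src k = b \<and> snk k = a))"

definition connected_graph :: "nat \<Rightarrow> nat \<Rightarrow> (nat \<Rightarrow> nat) \<Rightarrow> (nat \<Rightarrow> nat) \<Rightarrow> bool" where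
  "connected_graph n m src snk \<longleftrightarrow> (\<forall>i\<le>n. (adj m src snk)\<^sup>*\<^sup>* 0 i)"

definition is_equilibrium ::
  "nat \<Rightarrow> nat \<Rightarrow> nat \<Rightarrow> (nat \<Rightarrow> nat) \<Rightarrow> (nat \<Rightarrow> nat) \<Rightarrow> (nat \<Rightarrow> real) \<Rightarrow> (nat \<Rightarrow> real) \<Rightarrow> (nat \<Rightarrow> real)
   \<Rightarrow> (nat \<Rightarrow> real) \<Rightarrow> (nat \<Rightarrow> real) \<Rightarrow> (nat \<Rightarrow> real) \<Rightarrow> bool" where
  "is_equilibrium n m ng src snk g D p ub phib wb \<longleftrightarrow>
     (\<exists>ws. \<forall>j\<le>ng. wb j = ws) \<and>
     (\<forall>j\<le>ng. 0 = - D j * wb j - Emul n (gradU n m src snk g phib) j + p j + ub j) \<and>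
     (\<forall>i. ng < i \<and> i \<le> n \<longrightarrow> 0 = - Emul n (gradU n m src snk g phib) i + p i)"

definition is_solution ::
  "nat \<Rightarrow> nat \<Rightarrow> nat \<Rightarrow> (nat \<Rightarrow> nat) \<Rightarrow> (nat \<Rightarrow> nat) \<Rightarrow> (nat \<Rightarrow> real) \<Rightarrow> (nat \<Rightarrow> real) \<Rightarrow> (nat \<Rightarrow> real)
   \<Rightarrow> (nat \<Rightarrow> real) \<Rightarrow> real set \<Rightarrow> (real \<Rightarrow> nat \<Rightarrow> real) \<Rightarrow> (real \<Rightarrow> nat \<Rightarrow> real)
   \<Rightarrow> (real \<Rightarrow> nat \<Rightarrow> real) \<Rightarrow> (real \<Rightarrow> nat \<Rightarrow> real) \<Rightarrow> bool" where
  "is_solution n m ng src snk g M D p T phig phil w u \<longleftrightarrow>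
     (\<forall>t\<in>T.
        (\<forall>i<n. ((\<lambda>s. phig s i) has_real_derivative EgT ng (w t) i) (at t)) \<and>
        (\<forall>i<n. (\<lambda>s. phil s i) differentiable (at t)) \<and>
        (\<exists>v. \<forall>i<n. phil t i = ElT n ng v i) \<and>
        (\<forall>j\<le>ng. \<exists>wd. ((\<lambda>s. w s j) has_real_derivative wd) (at t) \<and>
            M j * wd = - D j * w t j
                       - Emul n (gradU n m src snk g (\<lambda>i. phig t i + phil t i)) j + p j + u t j) \<and>
        (\<forall>i. ng < i \<and> i \<le> n \<longrightarrow>
            0 = - Emul n (gradU n m src snk g (\<lambda>i. phig t i + phil t i)) i + p i))"

definition flat_state :: "nat \<Rightarrow> ((nat \<Rightarrow> real) \<Rightarrow> (nat \<Rightarrow> real) \<Rightarrow> real) \<Rightarrow> (nat \<Rightarrow> real) \<Rightarrow> real" where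
  "flat_state n S x = S (\<lambda>i. x i) (\<lambda>j. x (n + j))"

definition storage_C1 :: "nat \<Rightarrow> nat \<Rightarrow> ((nat \<Rightarrow> real) \<Rightarrow> (nat \<Rightarrow> real) \<Rightarrow> real) \<Rightarrow> bool" where
  "storage_C1 n ng S \<longleftrightarrow>
     (\<forall>phi1 phi2 w1 w2. (\<forall>i<n. phi1 i = phi2 i) \<and> (\<forall>j\<le>ng. w1 j = w2 j) \<longrightarrow> S phi1 w1 = S phi2 w2) \<and>
     (\<exists>P. \<forall>i < n + ng + 1.
        (\<forall>x. ((\<lambda>h. flat_state n S (x(i := x i + h))) has_real_derivative P i x) (at 0)) \<and>
        continuous_on UNIV (P i))"

definition near_state :: "nat \<Rightarrow> nat \<Rightarrow> real \<Rightarrow> (nat \<Rightarrow> real) \<Rightarrow> (nat \<Rightarrow> real) \<Rightarrow> (nat \<Rightarrow> real) \<Rightarrow> (nat \<Rightarrow> real) \<Rightarrow> bool" where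
  "near_state n ng e phib wb phi w \<longleftrightarrow> (\<forall>i<n. \<bar>phi i - phib i\<bar> < e) \<and> (\<forall>j\<le>ng. \<bar>w j - wb j\<bar> < e)"

definition pos_def :: "nat \<Rightarrow> (nat \<Rightarrow> nat \<Rightarrow> real) \<Rightarrow> bool" where
  "pos_def ng Q \<longleftrightarrow> (\<forall>x. (\<exists>j\<le>ng. x j \<noteq> 0) \<longrightarrow> (\<Sum>j\<le>ng. \<Sum>k\<le>ng. x j * Q j k * x k) > 0)"

definition out_strict_incr_passive ::
  "nat \<Rightarrow> nat \<Rightarrow> nat \<Rightarrow> (nat \<Rightarrow> nat) \<Rightarrow> (nat \<Rightarrow> nat) \<Rightarrow> (nat \<Rightarrow> real) \<Rightarrow> (nat \<Rightarrow> real) \<Rightarrow> (nat \<Rightarrow> real)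
   \<Rightarrow> (nat \<Rightarrow> real) \<Rightarrow> (nat \<Rightarrow> real) \<Rightarrow> (nat \<Rightarrow> real) \<Rightarrow> (nat \<Rightarrow> real) \<Rightarrow> bool" where
  "out_strict_incr_passive n m ng src snk g M D p ub phib wb \<longleftrightarrow>
     (\<exists>S Q X. storage_C1 n ng S \<and> pos_def ng Q \<and>
        (\<exists>e>0. \<forall>phi w. near_state n ng e phib wb phi w \<longrightarrow> (phi, w) \<in> X) \<and>
        (\<forall>(phi, w)\<in>X. S phi w \<ge> 0) \<and>
        (\<forall>T phig phil w u. open T \<longrightarrow> is_solution n m ng src snk g M D p T phig phil w u \<longrightarrow>
           (\<forall>t\<in>T. ((\<lambda>i. phig t i + phil t i), w t) \<in> X) \<longrightarrow>
           (\<forall>t\<in>T. \<exists>Sd. ((\<lambda>s. S (\<lambda>i. phig s i + phil s i) (w s)) has_real_derivative Sd) (at t) \<and>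
               Sd \<le> - (\<Sum>j\<le>ng. \<Sum>k\<le>ng. (w t j - wb j) * Q j k * (w t k - wb k))
                     + (\<Sum>j\<le>ng. (w t j - wb j) * (u t j - ub j)))))"

definition Sfun ::
  "nat \<Rightarrow> nat \<Rightarrow> nat \<Rightarrow> (nat \<Rightarrow> nat) \<Rightarrow> (nat \<Rightarrow> nat) \<Rightarrow> (nat \<Rightarrow> real) \<Rightarrow> (nat \<Rightarrow> real)
   \<Rightarrow> (nat \<Rightarrow> real) \<Rightarrow> (nat \<Rightarrow> real) \<Rightarrow> (nat \<Rightarrow> real) \<Rightarrow> (nat \<Rightarrow> real) \<Rightarrow> real" where
  "Sfun n m ng src snk g M phib wb phi w =
     (1/2) * (\<Sum>j\<le>ng. M j * (w j - wb j)\<^sup>2)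
     + Upot n m src snk g phi - Upot n m src snk g phib
     - (\<Sum>i<n. (phi i - phib i) * gradU n m src snk g phib i)"

end

theory Submission
  imports Defs
begin

(* The storage function is the kinetic energy plus the Bregman divergence of U at the
   equilibrium angles. The latter splits into edge terms g k * (cos b - cos a - sin b * (a - b)),
   tangent gaps of the strictly convex function -cos on (-pi/2, pi/2); they are nonnegative near
   the equilibrium and vanish only if all angle differences agree, which on a connected network
   forces phi = phib. Along solutions, dS/dt = (w - wb)^T (M w' + E_g (grad U(phi) - grad U(phib))):
   the load angles drop out since grad U(phi) - grad U(phib) is orthogonal to the range of E_l^T
   by the algebraic equations, and the synchronous frequency wb drops out since the columns of E
   sum to zero. Subtracting the equilibrium swing equation then yields dissipation with Q = D. *)

lemma tangent_gap_pos_of_strict_mono_deriv: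
  fixes f f' :: "real \<Rightarrow> real"
  assumes I: "is_interval I"
    and deriv: "\<And>x. x \<in> I \<Longrightarrow> (f has_real_derivative f' x) (at x)"
    and mono: "strict_mono_on I f'"
    and a: "a \<in> I" and b: "b \<in> I" and ab: "a \<noteq> b"
  shows "f a - f b - f' b * (a - b) > 0"
proof (cases "b < a")
  case True
  obtain z where z: "b < z" "z < a" "f a - f b = (a - b) * f' z"
    using MVT2[OF True, of f f'] deriv mem_is_interval_1_I[OF I b a] by blast
  have "f' b < f' z"
    using z mem_is_interval_1_I[OF I b a] by (intro strict_mono_onD[OF mono] b) auto
  then have "(a - b) * f' b < (a - b) * f' z" using True by simp
  with z(3) show ?thesis by (simp add: algebra_simps)
next
  case False
  with ab have lt: "a < b" by simp
  obtain z where z: "a < z" "z < b" "f b - f a = (b - a) * f' z"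
    using MVT2[OF lt, of f f'] deriv mem_is_interval_1_I[OF I a b] by blast
  have "f' z < f' b"
    using z mem_is_interval_1_I[OF I a b] by (intro strict_mono_onD[OF mono] b) auto
  then have "(b - a) * f' z < (b - a) * f' b" using lt by simp
  with z(3) show ?thesis by (simp add: algebra_simps)
qed

lemma cos_tangent_gap_pos:
  fixes a b :: real
  assumes "\<bar>a\<bar> < pi/2" "\<bar>b\<bar> < pi/2" "a \<noteq> b"
  shows "cos b - cos a - sin b * (a - b) > 0"
proof -
  have "strict_mono_on {-(pi/2)<..<pi/2} sin"
    by (auto intro!: strict_mono_onI sin_monotone_2pi)
  moreover have "((\<lambda>x. - cos x) has_real_derivative sin x) (at x)" for x
    by (auto intro!: derivative_eq_intros)
  ultimately have "- cos a - - cos b - sin b * (a - b) > 0"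
    using assms by (intro tangent_gap_pos_of_strict_mono_deriv[where I="{-(pi/2)<..<pi/2}"]) auto
  then show ?thesis by simp
qed

lemma cos_tangent_gap_nonneg:
  fixes a b :: real
  assumes "\<bar>a\<bar> < pi/2" "\<bar>b\<bar> < pi/2"
  shows "cos b - cos a - sin b * (a - b) \<ge> 0"
  using cos_tangent_gap_pos[OF assms] by (cases "a = b") force+

definition bus_angle :: "(nat \<Rightarrow> real) \<Rightarrow> nat \<Rightarrow> real" where
  "bus_angle phi b = (if b = 0 then 0 else phi (b - 1))"

lemma sum_lessThan_Suc_eq_bus_angle:
  assumes "b \<le> n"
  shows "(\<Sum>i<n. if Suc i = b then phi i else 0) = bus_angle phi b"
proof (cases "b = 0")
  case False
  then have "(\<Sum>i<n. if Suc i = b then phi i else 0) = (\<Sum>i<n. if i = b - 1 then phi i else 0)"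
    by (intro sum.cong) auto
  with False assms show ?thesis by (simp add: bus_angle_def)
qed (simp add: bus_angle_def)

lemma RphiT_eq_bus_angle_diff:
  assumes "src k \<noteq> snk k" "src k \<le> n" "snk k \<le> n"
  shows "RphiT n src snk phi k = bus_angle phi (snk k) - bus_angle phi (src k)"
proof -
  have "RphiT n src snk phi k
      = (\<Sum>i<n. (if Suc i = snk k then phi i else 0) - (if Suc i = src k then phi i else 0))"
    unfolding RphiT_def Rphi_def incid_def using assms(1) by (intro sum.cong) auto
  then show ?thesis by (simp add: sum_subtractf sum_lessThan_Suc_eq_bus_angle assms)
qed

lemma RphiT_diff:
  "RphiT n src snk (\<lambda>i. a i - b i) k = RphiT n src snk a k - RphiT n src snk b k"
  unfolding RphiT_def by (simp add: sum_subtractf right_diff_distrib)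

lemma sum_mult_gradU:
  "(\<Sum>i<n. d i * gradU n m src snk g x i)
     = (\<Sum>k<m. g k * sin (RphiT n src snk x k) * RphiT n src snk d k)"
  unfolding gradU_def RphiT_def
  by (simp add: sum_distrib_left sum_distrib_right mult_ac sum.swap[where A="{..<n}"])

text \<open>On a connected graph, angle differences along the edges determine the angles, because
  the reference bus 0 has angle 0.\<close>
lemma RphiT_eq_imp_eq:
  assumes edges: "\<forall>k<m. src k \<le> n \<and> snk k \<le> n \<and> src k \<noteq> snk k"
    and conn: "connected_graph n m src snk"
    and eq: "\<forall>k<m. RphiT n src snk phi k = RphiT n src snk psi k"
    and i: "i < n"
  shows "phi i = psi i"
proof -
  define d where "d = (\<lambda>i. phi i - psi i)"
  have adj_eq: "bus_angle d a = bus_angle d b" if ab: "adj m src snk a b" for a b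
  proof -
    obtain k where k: "k < m" "(src k = a \<and> snk k = b) \<or> (src k = b \<and> snk k = a)"
      using ab unfolding adj_def by blast
    have "RphiT n src snk d k = 0" using eq k(1) unfolding d_def RphiT_diff by simp
    with edges k show ?thesis by (auto simp: RphiT_eq_bus_angle_diff)
  qed
  have "bus_angle d 0 = bus_angle d b" if "(adj m src snk)\<^sup>*\<^sup>* 0 b" for b
    using that by (induction rule: rtranclp_induct) (auto dest: adj_eq)
  moreover have "(adj m src snk)\<^sup>*\<^sup>* 0 (Suc i)" using conn i unfolding connected_graph_def by simp
  ultimately have "bus_angle d (Suc i) = bus_angle d 0" by metis
  then show ?thesis by (simp add: bus_angle_def d_def)
qed

lemma abs_RphiT_diff_less:
  assumes edges: "\<forall>k<m. src k \<le> n \<and> snk k \<le> n \<and> src k \<noteq> snk k"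
    and k: "k < m" and e: "e > 0" and near: "\<forall>i<n. \<bar>phi i - psi i\<bar> < e"
  shows "\<bar>RphiT n src snk phi k - RphiT n src snk psi k\<bar> < 2 * e"
proof -
  define d where "d = (\<lambda>i. phi i - psi i)"
  have small: "\<bar>bus_angle d b\<bar> < e" if "b \<le> n" for b
    using e near that unfolding bus_angle_def d_def by auto
  have "RphiT n src snk phi k - RphiT n src snk psi k = bus_angle d (snk k) - bus_angle d (src k)"
    using edges k unfolding d_def RphiT_diff[symmetric] by (intro RphiT_eq_bus_angle_diff) auto
  with small[of "snk k"] small[of "src k"] edges k show ?thesis by auto
qed

lemma Sfun_eq_sum_cos_tangent_gap:
  "Sfun n m ng src snk g M phib wb phi w = (1/2) * (\<Sum>j\<le>ng. M j * (w j - wb j)\<^sup>2)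
     + (\<Sum>k<m. g k * (cos (RphiT n src snk phib k) - cos (RphiT n src snk phi k)
          - sin (RphiT n src snk phib k) * (RphiT n src snk phi k - RphiT n src snk phib k)))"
proof -
  have "(\<Sum>i<n. (phi i - phib i) * gradU n m src snk g phib i)
     = (\<Sum>k<m. g k * sin (RphiT n src snk phib k) * (RphiT n src snk phi k - RphiT n src snk phib k))"
    by (simp add: sum_mult_gradU RphiT_diff)
  moreover have "(\<Sum>k<m. g k * (cos (RphiT n src snk phib k) - cos (RphiT n src snk phi k)
          - sin (RphiT n src snk phib k) * (RphiT n src snk phi k - RphiT n src snk phib k)))
     = (\<Sum>k<m. g k * cos (RphiT n src snk phib k)) - (\<Sum>k<m. g k * cos (RphiT n src snk phi k))
        - (\<Sum>k<m. g k * sin (RphiT n src snk phib k) * (RphiT n src snk phi k - RphiT n src snk phib k))"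
    by (simp add: sum_subtractf[symmetric] algebra_simps)
  ultimately show ?thesis unfolding Sfun_def Upot_def by simp
qed

lemma Sfun_local_strict_min:
  assumes edges: "\<forall>k<m. src k \<le> n \<and> snk k \<le> n \<and> src k \<noteq> snk k"
    and conn: "connected_graph n m src snk"
    and g_pos: "\<forall>k<m. g k > 0"
    and M_pos: "\<forall>j\<le>ng. M j > 0"
    and angles: "\<forall>k<m. \<bar>RphiT n src snk phib k\<bar> < pi / 2"
  shows "\<exists>e>0. \<forall>phi w. near_state n ng e phib wb phi w \<longrightarrow>
     Sfun n m ng src snk g M phib wb phi w \<ge> 0 \<and>
     ((\<exists>i<n. phi i \<noteq> phib i) \<or> (\<exists>j\<le>ng. w j \<noteq> wb j) \<longrightarrow> Sfun n m ng src snk g M phib wb phi w > 0)"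
proof -
  define e where "e = Min (insert 1 ((\<lambda>k. (pi/2 - \<bar>RphiT n src snk phib k\<bar>) / 3) ` {..<m}))"
  have e_pos: "e > 0" unfolding e_def using angles by (subst Min_gr_iff) auto
  have e_margin: "3 * e \<le> pi/2 - \<bar>RphiT n src snk phib k\<bar>" if "k < m" for k
  proof -
    have "e \<le> (pi/2 - \<bar>RphiT n src snk phib k\<bar>) / 3" unfolding e_def using that by (intro Min_le) auto
    then show ?thesis by simp
  qed
  show ?thesis
  proof (intro exI[of _ e] conjI allI impI e_pos)
    fix phi w assume near: "near_state n ng e phib wb phi w"
    let ?th = "RphiT n src snk phi" and ?tb = "RphiT n src snk phib"
    define gap where "gap k = g k * (cos (?tb k) - cos (?th k) - sin (?tb k) * (?th k - ?tb k))" for k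
    define kin where "kin = (\<Sum>j\<le>ng. M j * (w j - wb j)\<^sup>2)"
    have S_eq: "Sfun n m ng src snk g M phib wb phi w = (1/2) * kin + (\<Sum>k<m. gap k)"
      unfolding Sfun_eq_sum_cos_tangent_gap gap_def kin_def ..
    have th_bound: "\<bar>?th k\<bar> < pi/2" if k: "k < m" for k
    proof -
      have "\<bar>?th k - ?tb k\<bar> < 2 * e"
        using near unfolding near_state_def by (intro abs_RphiT_diff_less[OF edges k e_pos]) auto
      with e_margin[OF k] e_pos show ?thesis by linarith
    qed
    have gap_nonneg: "gap k \<ge> 0" if k: "k < m" for k
      unfolding gap_def using g_pos k angles th_bound[OF k]
      by (intro mult_nonneg_nonneg cos_tangent_gap_nonneg) (auto simp: less_imp_le)
    have kin_terms_nonneg: "M j * (w j - wb j)\<^sup>2 \<ge> 0" if "j \<le> ng" for j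
      using M_pos that by (simp add: less_imp_le)
    have kin_nonneg: "kin \<ge> 0" unfolding kin_def using kin_terms_nonneg by (intro sum_nonneg) auto
    have gaps_nonneg: "(\<Sum>k<m. gap k) \<ge> 0" using gap_nonneg by (intro sum_nonneg) auto
    show "Sfun n m ng src snk g M phib wb phi w \<ge> 0" unfolding S_eq using kin_nonneg gaps_nonneg by simp
    assume "(\<exists>i<n. phi i \<noteq> phib i) \<or> (\<exists>j\<le>ng. w j \<noteq> wb j)"
    then consider j where "j \<le> ng" "w j \<noteq> wb j" | k where "k < m" "?th k \<noteq> ?tb k"
      using RphiT_eq_imp_eq[OF edges conn, of phi phib] by blast
    then show "Sfun n m ng src snk g M phib wb phi w > 0"
    proof cases
      case (1 j)
      then have "kin > 0" unfolding kin_def using M_pos kin_terms_nonneg by (intro sum_pos2[where i=j]) auto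
      then show ?thesis unfolding S_eq using gaps_nonneg by simp
    next
      case (2 k)
      then have "gap k > 0"
        unfolding gap_def using g_pos angles th_bound[OF 2(1)]
        by (intro mult_pos_pos cos_tangent_gap_pos) auto
      then have "(\<Sum>k<m. gap k) > 0" using 2 gap_nonneg by (intro sum_pos2[where i=k]) auto
      then show ?thesis unfolding S_eq using kin_nonneg by simp
    qed
  qed
qed

lemma Emul_diff: "Emul n (\<lambda>i. a i - b i) j = Emul n a j - Emul n b j"
  unfolding Emul_def by (simp add: sum_subtractf right_diff_distrib)

lemma sum_mult_ElT: "(\<Sum>i<n. c i * ElT n ng v i) = (\<Sum>j\<in>{ng<..n}. v j * Emul n c j)"
  unfolding ElT_def Emul_def
  by (simp add: sum_distrib_left sum_distrib_right mult_ac sum.swap[where A="{..<n}"])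

lemma sum_mult_EgT: "(\<Sum>i<n. c i * EgT ng w i) = (\<Sum>j\<le>ng. w j * Emul n c j)"
  unfolding EgT_def Emul_def
  by (simp add: sum_distrib_left sum_distrib_right mult_ac sum.swap[where A="{..<n}"])

lemma sum_Emat_column:
  assumes "i < n"
  shows "(\<Sum>j\<le>n. Emat j i) = 0"
proof -
  have "(\<Sum>j\<le>n. Emat j i) = (\<Sum>j\<le>n. (if j = 0 then -1 else 0) + (if j = Suc i then 1 else 0))"
    unfolding Emat_def by (intro sum.cong) auto
  with assms show ?thesis by (simp add: sum.distrib)
qed

lemma sum_Emul: "(\<Sum>j\<le>n. Emul n c j) = 0"
proof -
  have "(\<Sum>j\<le>n. Emul n c j) = (\<Sum>i<n. c i * (\<Sum>j\<le>n. Emat j i))"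
    unfolding Emul_def by (simp add: sum_distrib_left mult_ac sum.swap[where A="{..n}"])
  then show ?thesis by (simp add: sum_Emat_column)
qed

lemma sum_Emul_generators:
  assumes "ng \<le> n" and loads: "\<forall>j. ng < j \<and> j \<le> n \<longrightarrow> Emul n c j = 0"
  shows "(\<Sum>j\<le>ng. Emul n c j) = 0"
proof -
  have "{..n} = {..ng} \<union> {ng<..n}" using assms(1) by auto
  then have "(\<Sum>j\<le>n. Emul n c j) = (\<Sum>j\<le>ng. Emul n c j) + (\<Sum>j\<in>{ng<..n}. Emul n c j)"
    by (simp add: sum.union_disjoint ivl_disj_int)
  moreover have "(\<Sum>j\<in>{ng<..n}. Emul n c j) = 0" using loads by (intro sum.neutral) auto
  ultimately show ?thesis using sum_Emul[of n c] by simp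
qed

lemma sum_mult_EgT_shift:
  assumes "ng \<le> n" "\<forall>j. ng < j \<and> j \<le> n \<longrightarrow> Emul n c j = 0" "\<forall>j\<le>ng. wb j = ws"
  shows "(\<Sum>i<n. c i * EgT ng w i) = (\<Sum>j\<le>ng. (w j - wb j) * Emul n c j)"
proof -
  have "(\<Sum>j\<le>ng. wb j * Emul n c j) = ws * (\<Sum>j\<le>ng. Emul n c j)"
    using assms(3) by (simp add: sum_distrib_left)
  with sum_Emul_generators[OF assms(1,2)] show ?thesis
    by (simp add: sum_mult_EgT left_diff_distrib sum_subtractf)
qed

lemma ElT_range_orthogonal_derivative:
  assumes T: "open T" "t \<in> T"
    and range: "\<forall>s\<in>T. \<exists>v. \<forall>i<n. phil s i = ElT n ng v i"
    and loads: "\<forall>j. ng < j \<and> j \<le> n \<longrightarrow> Emul n c j = 0"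
    and deriv: "\<And>i. i < n \<Longrightarrow> ((\<lambda>s. phil s i) has_real_derivative dl i) (at t)"
  shows "(\<Sum>i<n. c i * dl i) = 0"
proof -
  define f where "f s = (\<Sum>i<n. c i * phil s i)" for s
  have df: "(f has_real_derivative (\<Sum>i<n. c i * dl i)) (at t)"
    unfolding f_def by (intro DERIV_sum DERIV_cmult deriv) auto
  have f0: "f s = 0" if s: "s \<in> T" for s
  proof -
    obtain v where "\<forall>i<n. phil s i = ElT n ng v i" using range s by blast
    then have "f s = (\<Sum>j\<in>{ng<..n}. v j * Emul n c j)"
      unfolding f_def sum_mult_ElT[symmetric] by (intro sum.cong) auto
    with loads show ?thesis by (simp add: sum.neutral)
  qed
  have "(f has_real_derivative 0) (at t)"
    using f0 by (intro has_field_derivative_transform_within_open[OF DERIV_const T]) simp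
  with df show ?thesis by (rule DERIV_unique)
qed

lemma Sfun_has_derivative:
  assumes dphi: "\<And>i. i < n \<Longrightarrow> ((\<lambda>s. phi s i) has_real_derivative dphi i) (at t)"
    and dw: "\<And>j. j \<le> ng \<Longrightarrow> ((\<lambda>s. w s j) has_real_derivative dw j) (at t)"
  shows "((\<lambda>s. Sfun n m ng src snk g M phib wb (phi s) (w s)) has_real_derivative
      (\<Sum>j\<le>ng. M j * (w t j - wb j) * dw j)
      + (\<Sum>i<n. dphi i * (gradU n m src snk g (phi t) i - gradU n m src snk g phib i))) (at t)"
proof -
  have dth: "((\<lambda>s. RphiT n src snk (phi s) k) has_real_derivative RphiT n src snk dphi k) (at t)" for k
    unfolding RphiT_def by (intro DERIV_sum DERIV_cmult dphi) auto
  have "((\<lambda>s. Upot n m src snk g (phi s)) has_real_derivative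
       - (\<Sum>k<m. g k * (- sin (RphiT n src snk (phi t) k) * RphiT n src snk dphi k))) (at t)"
    unfolding Upot_def by (intro DERIV_minus DERIV_sum DERIV_cmult DERIV_chain2[OF DERIV_cos] dth)
  then have dU: "((\<lambda>s. Upot n m src snk g (phi s)) has_real_derivative
       (\<Sum>i<n. dphi i * gradU n m src snk g (phi t) i)) (at t)"
    by (simp add: sum_mult_gradU sum_negf mult_ac)
  have dlin: "((\<lambda>s. \<Sum>i<n. (phi s i - phib i) * gradU n m src snk g phib i) has_real_derivative
       (\<Sum>i<n. dphi i * gradU n m src snk g phib i)) (at t)"
    by (intro DERIV_sum DERIV_cmult_right) (auto intro!: derivative_eq_intros dphi)
  have dkin: "((\<lambda>s. \<Sum>j\<le>ng. M j * (w s j - wb j)\<^sup>2) has_real_derivative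
       (\<Sum>j\<le>ng. M j * (2 * (w t j - wb j) * dw j))) (at t)"
    by (intro DERIV_sum DERIV_cmult) (auto intro!: derivative_eq_intros dw)
  have "((\<lambda>s. Sfun n m ng src snk g M phib wb (phi s) (w s)) has_real_derivative
      (1/2) * (\<Sum>j\<le>ng. M j * (2 * (w t j - wb j) * dw j))
      + (\<Sum>i<n. dphi i * gradU n m src snk g (phi t) i) - 0
      - (\<Sum>i<n. dphi i * gradU n m src snk g phib i)) (at t)"
    unfolding Sfun_def by (intro DERIV_diff DERIV_add DERIV_cmult dkin dU dlin DERIV_const)
  then show ?thesis
    by (simp add: sum_distrib_left sum_subtractf algebra_simps)
qed

lemma Sfun_derivative_along_solution:
  assumes ng_le: "ng \<le> n"
    and equil: "is_equilibrium n m ng src snk g D p ub phib wb"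
    and T: "open T" "t \<in> T"
    and sol: "is_solution n m ng src snk g M D p T phig phil w u"
  shows "((\<lambda>s. Sfun n m ng src snk g M phib wb (\<lambda>i. phig s i + phil s i) (w s)) has_real_derivative
     - (\<Sum>j\<le>ng. D j * (w t j - wb j)\<^sup>2) + (\<Sum>j\<le>ng. (w t j - wb j) * (u t j - ub j))) (at t)"
proof -
  define phi where "phi s = (\<lambda>i. phig s i + phil s i)" for s
  define c where "c i = gradU n m src snk g (phi t) i - gradU n m src snk g phib i" for i
  define dl where "dl i = deriv (\<lambda>s. phil s i) t" for i
  have dphig: "\<And>i. i < n \<Longrightarrow> ((\<lambda>s. phig s i) has_real_derivative EgT ng (w t) i) (at t)"
    and dphil: "\<And>i. i < n \<Longrightarrow> (\<lambda>s. phil s i) differentiable (at t)"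
    and dw_ex: "\<forall>j\<le>ng. \<exists>wd. ((\<lambda>s. w s j) has_real_derivative wd) (at t) \<and>
       M j * wd = - D j * w t j - Emul n (gradU n m src snk g (phi t)) j + p j + u t j"
    and alg: "\<And>j. ng < j \<and> j \<le> n \<Longrightarrow> 0 = - Emul n (gradU n m src snk g (phi t)) j + p j"
    using sol T(2) unfolding is_solution_def phi_def by blast+
  have range: "\<forall>s\<in>T. \<exists>v. \<forall>i<n. phil s i = ElT n ng v i"
    using sol unfolding is_solution_def by blast
  obtain wd where wd: "\<And>j. j \<le> ng \<Longrightarrow> ((\<lambda>s. w s j) has_real_derivative wd j) (at t)"
    and swing: "\<And>j. j \<le> ng \<Longrightarrow>
       M j * wd j = - D j * w t j - Emul n (gradU n m src snk g (phi t)) j + p j + u t j"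
    using dw_ex by metis
  obtain ws where ws: "\<forall>j\<le>ng. wb j = ws"
    and eq_gen: "\<And>j. j \<le> ng \<Longrightarrow> 0 = - D j * wb j - Emul n (gradU n m src snk g phib) j + p j + ub j"
    and eq_load: "\<And>j. ng < j \<and> j \<le> n \<Longrightarrow> 0 = - Emul n (gradU n m src snk g phib) j + p j"
    using equil unfolding is_equilibrium_def by blast
  have loads: "\<forall>j. ng < j \<and> j \<le> n \<longrightarrow> Emul n c j = 0"
    using alg eq_load unfolding c_def Emul_diff by fastforce
  have swing_incr: "M j * wd j = - D j * (w t j - wb j) - Emul n c j + (u t j - ub j)" if "j \<le> ng" for j
    using swing[OF that] eq_gen[OF that] unfolding c_def Emul_diff by (simp add: algebra_simps)
  have dl: "((\<lambda>s. phil s i) has_real_derivative dl i) (at t)" if "i < n" for i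
    unfolding dl_def using dphil[OF that] by (simp add: DERIV_deriv_iff_real_differentiable)
  have power_gen: "(\<Sum>i<n. (EgT ng (w t) i + dl i) * c i) = (\<Sum>j\<le>ng. (w t j - wb j) * Emul n c j)"
    using sum_mult_EgT_shift[OF ng_le loads ws, of "w t"]
      ElT_range_orthogonal_derivative[OF T range loads dl]
    by (simp add: distrib_left distrib_right sum.distrib mult.commute)
  have dS: "((\<lambda>s. Sfun n m ng src snk g M phib wb (phi s) (w s)) has_real_derivative
      (\<Sum>j\<le>ng. M j * (w t j - wb j) * wd j) + (\<Sum>i<n. (EgT ng (w t) i + dl i) * c i)) (at t)"
    unfolding c_def phi_def using dphig dl wd by (intro Sfun_has_derivative DERIV_add) auto
  have "(\<Sum>j\<le>ng. M j * (w t j - wb j) * wd j) + (\<Sum>j\<le>ng. (w t j - wb j) * Emul n c j)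
      = (\<Sum>j\<le>ng. (w t j - wb j) * (M j * wd j + Emul n c j))"
    by (simp add: sum.distrib[symmetric] algebra_simps)
  also have "\<dots> = (\<Sum>j\<le>ng. - (D j * (w t j - wb j)\<^sup>2) + (w t j - wb j) * (u t j - ub j))"
    by (intro sum.cong) (simp_all add: swing_incr power2_eq_square algebra_simps)
  also have "\<dots> = - (\<Sum>j\<le>ng. D j * (w t j - wb j)\<^sup>2) + (\<Sum>j\<le>ng. (w t j - wb j) * (u t j - ub j))"
    by (simp add: sum.distrib sum_negf sum_subtractf)
  finally show ?thesis using dS unfolding power_gen phi_def by simp
qed

lemma Sfun_cong:
  assumes "\<forall>i<n. phi1 i = phi2 i" "\<forall>j\<le>ng. w1 j = w2 j"
  shows "Sfun n m ng src snk g M phib wb phi1 w1 = Sfun n m ng src snk g M phib wb phi2 w2"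
proof -
  have "RphiT n src snk phi1 = RphiT n src snk phi2"
    unfolding RphiT_def using assms(1) by (intro ext sum.cong) auto
  moreover have "(\<Sum>i<n. (phi1 i - phib i) * gradU n m src snk g phib i)
      = (\<Sum>i<n. (phi2 i - phib i) * gradU n m src snk g phib i)"
    using assms(1) by (intro sum.cong) auto
  moreover have "(\<Sum>j\<le>ng. M j * (w1 j - wb j)\<^sup>2) = (\<Sum>j\<le>ng. M j * (w2 j - wb j)\<^sup>2)"
    using assms(2) by (intro sum.cong) auto
  ultimately show ?thesis unfolding Sfun_def Upot_def by simp
qed

lemma Sfun_storage_C1: "storage_C1 n ng (Sfun n m ng src snk g M phib wb)"
  unfolding storage_C1_def
proof (intro conjI allI impI)
  show "Sfun n m ng src snk g M phib wb phi1 w1 = Sfun n m ng src snk g M phib wb phi2 w2"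
    if "(\<forall>i<n. phi1 i = phi2 i) \<and> (\<forall>j\<le>ng. w1 j = w2 j)" for phi1 phi2 w1 w2
    using that Sfun_cong by blast
next
  define P where "P i x =
    (\<Sum>j\<le>ng. M j * (x (n + j) - wb j) * (if n + j = i then 1 else 0))
    + (\<Sum>i'<n. (if i' = i then 1 else 0)
         * (gradU n m src snk g x i' - gradU n m src snk g phib i'))" for i and x :: "nat \<Rightarrow> real"
  have "((\<lambda>h. flat_state n (Sfun n m ng src snk g M phib wb) (x(i := x i + h)))
      has_real_derivative P i x) (at 0)" for i x
  proof -
    have "((\<lambda>h. (x(i := x i + h)) k) has_real_derivative (if k = i then 1 else 0)) (at 0)" for k
      by (cases "k = i") (auto intro!: derivative_eq_intros)
    then show ?thesis
      using Sfun_has_derivative[where phi="\<lambda>h. x(i := x i + h)" and w="\<lambda>h j. (x(i := x i + h)) (n + j)"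
          and t=0, of n "\<lambda>k. if k = i then 1 else 0" ng "\<lambda>j. if n + j = i then 1 else 0"]
      unfolding flat_state_def P_def by simp
  qed
  moreover have "continuous_on UNIV (P i)" for i
    unfolding P_def gradU_def RphiT_def
    by (intro continuous_intros continuous_on_product_coordinates)
  ultimately show "\<exists>P. \<forall>i<n + ng + 1.
      (\<forall>x. ((\<lambda>h. flat_state n (Sfun n m ng src snk g M phib wb) (x(i := x i + h)))
        has_real_derivative P i x) (at 0)) \<and> continuous_on UNIV (P i)"
    by blast
qed

lemma quadratic_form_diag:
  fixes x d :: "nat \<Rightarrow> real"
  shows "(\<Sum>j\<le>ng. \<Sum>k\<le>ng. x j * (if j = k then d j else 0) * x k) = (\<Sum>j\<le>ng. d j * (x j)\<^sup>2)"
proof (intro sum.cong refl)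
  fix j assume "j \<in> {..ng}"
  have "(\<Sum>k\<le>ng. x j * (if j = k then d j else 0) * x k) = (\<Sum>k\<le>ng. if j = k then d j * x j * x k else 0)"
    by (intro sum.cong) auto
  with \<open>j \<in> {..ng}\<close> show "(\<Sum>k\<le>ng. x j * (if j = k then d j else 0) * x k) = d j * (x j)\<^sup>2"
    by (simp add: power2_eq_square)
qed

lemma pos_def_diag:
  fixes d :: "nat \<Rightarrow> real"
  assumes "\<forall>j\<le>ng. d j > 0"
  shows "pos_def ng (\<lambda>j k. if j = k then d j else 0)"
  unfolding pos_def_def quadratic_form_diag
proof (intro allI impI)
  fix x :: "nat \<Rightarrow> real"
  assume "\<exists>j\<le>ng. x j \<noteq> 0"
  then obtain j where "j \<le> ng" "x j \<noteq> 0" by blast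
  with assms show "(\<Sum>j\<le>ng. d j * (x j)\<^sup>2) > 0"
    by (intro sum_pos2[where i=j]) (auto simp: less_imp_le)
qed

lemma out_strict_incr_passiveI:
  assumes "storage_C1 n ng S" "pos_def ng Q" "e > 0"
    and nonneg: "\<forall>phi w. near_state n ng e phib wb phi w \<longrightarrow> S phi w \<ge> 0"
    and dissipation: "\<forall>T phig phil w u. open T \<longrightarrow> is_solution n m ng src snk g M D p T phig phil w u \<longrightarrow>
      (\<forall>t\<in>T. ((\<lambda>s. S (\<lambda>i. phig s i + phil s i) (w s)) has_real_derivative
        - (\<Sum>j\<le>ng. \<Sum>k\<le>ng. (w t j - wb j) * Q j k * (w t k - wb k))
        + (\<Sum>j\<le>ng. (w t j - wb j) * (u t j - ub j))) (at t))"
  shows "out_strict_incr_passive n m ng src snk g M D p ub phib wb"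
  unfolding out_strict_incr_passive_def
proof (intro exI[of _ S] exI[of _ Q] exI[of _ "{(phi, w). near_state n ng e phib wb phi w}"] conjI)
  show "\<exists>e'>0. \<forall>phi w. near_state n ng e' phib wb phi w
      \<longrightarrow> (phi, w) \<in> {(phi, w). near_state n ng e phib wb phi w}"
    using \<open>e > 0\<close> by blast
  show "\<forall>(phi, w)\<in>{(phi, w). near_state n ng e phib wb phi w}. S phi w \<ge> 0"
    using nonneg by blast
  show "\<forall>T phig phil w u. open T \<longrightarrow> is_solution n m ng src snk g M D p T phig phil w u \<longrightarrow>
      (\<forall>t\<in>T. ((\<lambda>i. phig t i + phil t i), w t) \<in> {(phi, w). near_state n ng e phib wb phi w}) \<longrightarrow>
      (\<forall>t\<in>T. \<exists>Sd. ((\<lambda>s. S (\<lambda>i. phig s i + phil s i) (w s)) has_real_derivative Sd) (at t) \<and>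
        Sd \<le> - (\<Sum>j\<le>ng. \<Sum>k\<le>ng. (w t j - wb j) * Q j k * (w t k - wb k))
          + (\<Sum>j\<le>ng. (w t j - wb j) * (u t j - ub j)))"
    using dissipation by blast
qed (use assms in auto)

theorem proposition1:
  fixes n m ng :: nat
    and src snk :: "nat \<Rightarrow> nat"
    and beta V M D p ub phib wb :: "nat \<Rightarrow> real"
  defines "g \<equiv> gam src snk beta V"
  assumes ng_le: "ng \<le> n"
    and edges: "\<forall>k<m. src k \<le> n \<and> snk k \<le> n \<and> src k \<noteq> snk k"
    and conn: "connected_graph n m src snk"
    and beta_neg: "\<forall>k<m. beta k < 0"
    and V_pos: "\<forall>i\<le>n. V i > 0"
    and M_pos: "\<forall>j\<le>ng. M j > 0"
    and D_pos: "\<forall>j\<le>ng. D j > 0"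
    and equil: "is_equilibrium n m ng src snk g D p ub phib wb"
    and angles: "\<forall>k<m. \<bar>RphiT n src snk phib k\<bar> < pi / 2"
  shows "out_strict_incr_passive n m ng src snk g M D p ub phib wb
       \<and> (\<forall>T phig phil w u. open T \<longrightarrow> is_solution n m ng src snk g M D p T phig phil w u \<longrightarrow>
            (\<forall>t\<in>T. ((\<lambda>s. Sfun n m ng src snk g M phib wb (\<lambda>i. phig s i + phil s i) (w s))
                has_real_derivative
                  (- (\<Sum>j\<le>ng. D j * (w t j - wb j)\<^sup>2) + (\<Sum>j\<le>ng. (w t j - wb j) * (u t j - ub j)))) (at t)))
       \<and> (\<exists>e>0. \<forall>phi w. near_state n ng e phib wb phi w
              \<and> ((\<exists>i<n. phi i \<noteq> phib i) \<or> (\<exists>j\<le>ng. w j \<noteq> wb j)) \<longrightarrow>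
              Sfun n m ng src snk g M phib wb phib wb < Sfun n m ng src snk g M phib wb phi w)"
proof -
  let ?S = "Sfun n m ng src snk g M phib wb"
  have "g k > 0" if k: "k < m" for k
  proof -
    have "V (src k) > 0" "V (snk k) > 0" "beta k < 0" using k beta_neg V_pos edges by auto
    then show ?thesis unfolding g_def gam_def by (simp add: mult_neg_pos)
  qed
  then obtain e where "e > 0" and local_min: "\<forall>phi w. near_state n ng e phib wb phi w \<longrightarrow>
      ?S phi w \<ge> 0 \<and> ((\<exists>i<n. phi i \<noteq> phib i) \<or> (\<exists>j\<le>ng. w j \<noteq> wb j) \<longrightarrow> ?S phi w > 0)"
    using Sfun_local_strict_min[OF edges conn _ M_pos angles] by blast
  have dissipation: "\<forall>T phig phil w u. open T \<longrightarrow> is_solution n m ng src snk g M D p T phig phil w u \<longrightarrow>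
      (\<forall>t\<in>T. ((\<lambda>s. ?S (\<lambda>i. phig s i + phil s i) (w s)) has_real_derivative
        - (\<Sum>j\<le>ng. D j * (w t j - wb j)\<^sup>2) + (\<Sum>j\<le>ng. (w t j - wb j) * (u t j - ub j))) (at t))"
    using Sfun_derivative_along_solution[OF ng_le equil] by blast
  have "out_strict_incr_passive n m ng src snk g M D p ub phib wb"
    using local_min dissipation
    by (intro out_strict_incr_passiveI[OF Sfun_storage_C1 pos_def_diag[OF D_pos] \<open>e > 0\<close>])
      (simp_all add: quadratic_form_diag)
  moreover have "?S phib wb = 0" unfolding Sfun_def by simp
  with local_min \<open>e > 0\<close> have "\<exists>e>0. \<forall>phi w. near_state n ng e phib wb phi w
      \<and> ((\<exists>i<n. phi i \<noteq> phib i) \<or> (\<exists>j\<le>ng. w j \<noteq> wb j)) \<longrightarrow> ?S phib wb < ?S phi w"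
    by (intro exI[of _ e]) auto
  ultimately show ?thesis using dissipation by blast
qed

end
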